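(* Let $n>k\ge 1$ be integers, not both even, let $\alpha=\lceil n/2\rceil-\lfloor (n-k)/2\rfloor$ and $\beta=k-\alpha$, and let $G=\sqrt{n/k}\,W_n^H\Sigma W_k$. Let $1\le p\le n$ and let $G_{p\times k}$ be any $p\times k$ submatrix of $G$ formed by $p$ of its rows. Then the smallest eigenvalue of $G_{p\times k}G_{p\times k}^H$ is at most $1$ and the largest eigenvalue of $G_{p\times k}G_{p\times k}^H$ is at least $1$.
   Context: For a positive integer $l$, $W_l$ denotes the unitary $l\times l$ DFT matrix, $(W_l)_{r,s}=\frac{1}{\sqrt l}e^{-j2\pi(r-1)(s-1)/l}$, and $^H$ denotes conjugate transpose. $\Sigma$ is the $n\times k$ matrix $\begin{pmatrix} I_\alpha & 0\\ 0 & 0\\ 0 & I_\beta\end{pmatrix}$: its first $\alpha$ rows are $(I_\alpha\ 0)$, its last $\beta$ rows are $(0\ I_\beta)$, and its middle $n-k$ rows are zero. *)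

theory Defs
  imports Complex_Main "Jordan_Normal_Form.Schur_Decomposition"
begin

definition dft_mat :: "nat \<Rightarrow> complex mat" where
  "dft_mat l = mat l l (\<lambda>(r, s).
     exp (- \<i> * complex_of_real (2 * pi * real r * real s / real l)) / complex_of_real (sqrt (real l)))"

text \<open>The n x k matrix Sigma: first alpha rows (I_alpha 0), last beta rows (0 I_beta),
  middle n-k rows zero (0-indexed; alpha + beta = k).\<close>
definition Sigma_mat :: "nat \<Rightarrow> nat \<Rightarrow> nat \<Rightarrow> nat \<Rightarrow> complex mat" where
  "Sigma_mat n k \<alpha> \<beta> = mat n k (\<lambda>(i, j).
     if i < \<alpha> \<and> j = i then 1
     else if n - \<beta> \<le> i \<and> j = \<alpha> + (i - (n - \<beta>)) then 1 else 0)"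

definition row_submat :: "'a mat \<Rightarrow> nat \<Rightarrow> (nat \<Rightarrow> nat) \<Rightarrow> 'a mat" where
  "row_submat A p f = mat p (dim_col A) (\<lambda>(i, j). A $$ (f i, j))"

end

theory Submission
  imports Defs
begin

text \<open>The matrix \<open>G\<^sub>p\<^sub>\<times>\<^sub>k G\<^sub>p\<^sub>\<times>\<^sub>k\<^sup>H\<close> is the principal submatrix of the Gram matrix
  \<open>G G\<^sup>H\<close> on the chosen rows, so it is Hermitian and its diagonal consists of squared row
  norms of \<open>G\<close>. Every row of \<open>G\<close> has unit norm: a row of \<open>W\<^sub>n\<^sup>H \<Sigma>\<close> has \<open>k\<close> entries of
  modulus \<open>1/\<surd>n\<close>, multiplication by the unitary \<open>W\<^sub>k\<close> preserves its norm, and the factor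
  \<open>\<surd>(n/k)\<close> compensates. Hence the real eigenvalues of \<open>G\<^sub>p\<^sub>\<times>\<^sub>k G\<^sub>p\<^sub>\<times>\<^sub>k\<^sup>H\<close>, counted with
  multiplicity, sum to its trace \<open>p\<close>, so the smallest is at most \<open>1\<close> and the largest at
  least \<open>1\<close>. Neither the parity condition, nor the precise value of \<open>\<alpha>\<close>, nor the
  injectivity of the row selection is needed.\<close>

lemma dim_row_mat_adjoint [simp]: "dim_row (mat_adjoint A) = dim_col A"
  and dim_col_mat_adjoint [simp]: "dim_col (mat_adjoint A) = dim_row A"
  by (auto simp: mat_adjoint_def mat_of_rows_def)

lemma mat_adjoint_index [simp]:
  "i < dim_col A \<Longrightarrow> j < dim_row A \<Longrightarrow> mat_adjoint A $$ (i, j) = cnj (A $$ (j, i))"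
  by (simp add: mat_adjoint_def mat_of_rows_index)

lemma gram_mat_index:
  assumes "i < dim_row A" "j < dim_row A"
  shows "(A * mat_adjoint A) $$ (i, j) = (\<Sum>s<dim_col A. A $$ (i, s) * cnj (A $$ (j, s)))"
  using assms by (simp add: scalar_prod_def atLeast0LessThan)

subsection \<open>Trace and eigenvalues\<close>

definition trace :: "'a::comm_ring_1 mat \<Rightarrow> 'a" where
  "trace A = (\<Sum>i<dim_row A. A $$ (i, i))"

lemma trace_mult_comm:
  assumes "A \<in> carrier_mat n m" "B \<in> carrier_mat m n"
  shows "trace (A * B) = trace (B * A)"
proof -
  have "trace (A * B) = (\<Sum>i<n. \<Sum>j<m. A $$ (i, j) * B $$ (j, i))"
    using assms by (simp add: trace_def scalar_prod_def atLeast0LessThan)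
  also have "\<dots> = (\<Sum>j<m. \<Sum>i<n. B $$ (j, i) * A $$ (i, j))"
    by (subst sum.swap) (simp add: mult.commute)
  also have "\<dots> = trace (B * A)"
    using assms by (simp add: trace_def scalar_prod_def atLeast0LessThan)
  finally show ?thesis .
qed

lemma trace_similar_mat_wit:
  assumes "similar_mat_wit A B P Q" "A \<in> carrier_mat n n"
  shows "trace A = trace B"
proof -
  note d = similar_mat_witD2[OF assms(2,1)]
  have "trace A = trace (P * (B * Q))" using d by (simp add: assoc_mult_mat[of P n n B n Q n])
  also have "\<dots> = trace ((B * Q) * P)" using d by (intro trace_mult_comm[of _ n n]) auto
  also have "\<dots> = trace B" using d by (simp add: assoc_mult_mat[of B n n Q n P n])
  finally show ?thesis .
qed

lemma trace_eq_sum_list_char_poly_roots: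
  fixes A :: "complex mat"
  assumes A: "A \<in> carrier_mat n n" and cp: "char_poly A = (\<Prod>e\<leftarrow>es. [:- e, 1:])"
  shows "trace A = sum_list es"
proof -
  obtain B P Q where sd: "schur_decomposition A es = (B, P, Q)"
    by (cases "schur_decomposition A es") auto
  from schur_decomposition[OF A cp sd]
  have sim: "similar_mat_wit A B P Q" and diag: "diag_mat B = es" by auto
  have B: "B \<in> carrier_mat n n" using similar_mat_witD2[OF A sim] by auto
  have "trace A = trace B" by (rule trace_similar_mat_wit[OF sim A])
  also have "\<dots> = sum_list (diag_mat B)"
    using B by (simp add: trace_def diag_mat_def sum_list_sum_nth atLeast0LessThan)
  finally show ?thesis unfolding diag .
qed

definition hermitian_mat :: "complex mat \<Rightarrow> bool" where
  "hermitian_mat M \<longleftrightarrow> (\<forall>i<dim_row M. \<forall>j<dim_row M. M $$ (i, j) = cnj (M $$ (j, i)))"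

lemma hermitian_gram_mat: "hermitian_mat (A * mat_adjoint A)"
  unfolding hermitian_mat_def
proof (intro allI impI)
  fix i j assume "i < dim_row (A * mat_adjoint A)" "j < dim_row (A * mat_adjoint A)"
  then have "i < dim_row A" "j < dim_row A" by simp_all
  then show "(A * mat_adjoint A) $$ (i, j) = cnj ((A * mat_adjoint A) $$ (j, i))"
    by (simp only: gram_mat_index) (simp add: cnj_sum mult.commute)
qed

lemma hermitian_mat_eigenvalue_real:
  assumes M: "M \<in> carrier_mat p p" and H: "hermitian_mat M" and e: "eigenvalue M e"
  shows "Im e = 0"
proof -
  obtain v where v: "v \<in> carrier_vec p" "v \<noteq> 0\<^sub>v p" "M *\<^sub>v v = e \<cdot>\<^sub>v v"
    using e M unfolding eigenvalue_def eigenvector_def by auto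
  define q where "q = (\<Sum>i<p. \<Sum>j<p. cnj (v $ i) * M $$ (i, j) * v $ j)"
  \<comment> \<open>\<open>q = v\<^sup>H M v = e \<parallel>v\<parallel>\<^sup>2\<close> equals its own conjugate\<close>
  have cnj_M: "cnj (M $$ (i, j)) = M $$ (j, i)" if "i < p" "j < p" for i j
    using H M that unfolding hermitian_mat_def by (metis carrier_matD(1) complex_cnj_cnj)
  have "cnj q = (\<Sum>i<p. \<Sum>j<p. v $ i * M $$ (j, i) * cnj (v $ j))"
    unfolding q_def cnj_sum by (intro sum.cong refl) (simp add: cnj_M)
  also have "\<dots> = q" unfolding q_def
    by (subst sum.swap) (intro sum.cong refl, simp only: mult.commute mult.left_commute)
  finally have "Im q = 0" by (simp add: complex_eq_iff)
  have "q = (\<Sum>i<p. cnj (v $ i) * (M *\<^sub>v v) $ i)"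
    unfolding q_def using M v(1)
    by (simp add: scalar_prod_def sum_distrib_left atLeast0LessThan mult.assoc)
  also have "\<dots> = e * (\<Sum>i<p. cnj (v $ i) * v $ i)"
    using v by (simp add: sum_distrib_left mult.left_commute)
  also have "(\<Sum>i<p. cnj (v $ i) * v $ i) = of_real (\<Sum>i<p. (cmod (v $ i))\<^sup>2)"
    unfolding of_real_sum by (intro sum.cong refl) (subst complex_norm_square, simp add: mult.commute)
  finally have q: "q = e * of_real (\<Sum>i<p. (cmod (v $ i))\<^sup>2)" .
  obtain i where i: "i < p" "v $ i \<noteq> 0"
    using v(1,2) by (metis carrier_vecD eq_vecI index_zero_vec)
  have "(\<Sum>i<p. (cmod (v $ i))\<^sup>2) > 0"
    by (rule sum_pos2[of _ i]) (use i in auto)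
  then show ?thesis using \<open>Im q = 0\<close> unfolding q by simp
qed

lemma hermitian_mat_Min_Max_eigenvalue_trace:
  assumes M: "M \<in> carrier_mat p p" and H: "hermitian_mat M" and p: "0 < p"
  defines "ev \<equiv> {x::real. eigenvalue M (complex_of_real x)}"
  shows "Min ev * p \<le> Re (trace M)" and "Re (trace M) \<le> Max ev * p"
proof -
  obtain es where es: "char_poly M = (\<Prod>e\<leftarrow>es. [:- e, 1:])" "length es = p"
    using char_poly_factorized[OF M] by blast
  have eigenvalue_iff: "eigenvalue M e \<longleftrightarrow> e \<in> set es" for e
    unfolding eigenvalue_root_char_poly[OF M] es(1) by (auto simp: poly_prod_list prod_list_zero_iff)
  have in_ev: "Re e \<in> ev" if "e \<in> set es" for e
  proof -
    have "Im e = 0" using hermitian_mat_eigenvalue_real[OF M H] that eigenvalue_iff by blast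
    then have "complex_of_real (Re e) = e" by (simp add: complex_eq_iff)
    then show ?thesis using that unfolding ev_def eigenvalue_iff by simp
  qed
  have "ev \<subseteq> Re ` set es"
    unfolding ev_def eigenvalue_iff by (auto intro: rev_image_eqI)
  then have fin: "finite ev" by (rule finite_subset) simp
  have Re_sum_list: "Re (sum_list xs) = (\<Sum>x\<leftarrow>xs. Re x)" for xs :: "complex list"
    by (induction xs) simp_all
  have tr: "Re (trace M) = (\<Sum>e\<leftarrow>es. Re e)"
    by (simp add: trace_eq_sum_list_char_poly_roots[OF M es(1)] Re_sum_list)
  have "Min ev * p = (\<Sum>e\<leftarrow>es. Min ev)" using es(2) by (simp add: sum_list_triv)
  also have "\<dots> \<le> Re (trace M)" unfolding tr
    by (rule sum_list_mono) (use Min_le[OF fin] in_ev in blast)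
  finally show "Min ev * p \<le> Re (trace M)" .
  have "Re (trace M) \<le> (\<Sum>e\<leftarrow>es. Max ev)" unfolding tr
    by (rule sum_list_mono) (use Max_ge[OF fin] in_ev in blast)
  also have "\<dots> = Max ev * p" using es(2) by (simp add: sum_list_triv)
  finally show "Re (trace M) \<le> Max ev * p" .
qed

subsection \<open>Unitarity of the DFT matrix\<close>

lemma sum_cis_multiples:
  fixes m :: int
  assumes k: "0 < k"
  shows "(\<Sum>s<k. cis (2 * pi * of_int m * real s / real k)) = (if int k dvd m then of_nat k else 0)"
proof -
  define w where "w = cis (2 * pi * of_int m / real k)"
  have powers: "cis (2 * pi * of_int m * real s / real k) = w ^ s" for s
    unfolding w_def DeMoivre by (simp add: mult_ac)
  have "real k * (2 * pi * of_int m / real k) = 2 * pi * of_int m"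
    using k by simp
  then have "w ^ k = 1" unfolding w_def DeMoivre by simp
  have w_eq_1: "w = 1 \<longleftrightarrow> int k dvd m"
  proof
    assume "w = 1"
    then have "Re w = 1" by simp
    then have "cos (2 * pi * of_int m / real k) = 1" unfolding w_def by simp
    then obtain j :: int where "2 * pi * of_int m / real k = of_int j * 2 * pi"
      by (auto simp: cos_one_2pi_int)
    then have "real_of_int m = real_of_int (j * int k)" using k by (simp add: field_simps)
    then show "int k dvd m" by (metis dvd_triv_right of_int_eq_iff)
  next
    assume "int k dvd m"
    then obtain j where "m = int k * j" by blast
    then show "w = 1" using k cis_multiple_2pi[of "of_int j"] unfolding w_def by (simp add: mult.assoc)
  qed
  show ?thesis
  proof (cases "int k dvd m")
    case True
    then show ?thesis unfolding powers using w_eq_1 by simp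
  next
    case False
    then have "(\<Sum>s<k. w ^ s) = (w ^ k - 1) / (w - 1)" using w_eq_1 by (intro geometric_sum) simp
    then show ?thesis unfolding powers using False \<open>w ^ k = 1\<close> by simp
  qed
qed

lemma dft_mat_index:
  "r < l \<Longrightarrow> s < l \<Longrightarrow>
    dft_mat l $$ (r, s) = cis (- 2 * pi * real r * real s / real l) / complex_of_real (sqrt (real l))"
  by (simp add: dft_mat_def cis_conv_exp)

lemma dft_mat_rows_orthonormal:
  assumes "t < l" "t' < l"
  shows "(\<Sum>s<l. dft_mat l $$ (t, s) * cnj (dft_mat l $$ (t', s))) = (if t = t' then 1 else 0)"
proof -
  have l: "0 < l" using assms by simp
  have sqrt_sq: "complex_of_real (sqrt (real l)) * complex_of_real (sqrt (real l)) = of_nat l"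
    by (simp flip: of_real_mult)
  have "dft_mat l $$ (t, s) * cnj (dft_mat l $$ (t', s))
      = cis (2 * pi * of_int (int t' - int t) * real s / real l) / of_nat l" if "s < l" for s
    using assms that
    by (simp add: dft_mat_index cis_cnj cis_mult sqrt_sq[symmetric] algebra_simps diff_divide_distrib)
  then have "(\<Sum>s<l. dft_mat l $$ (t, s) * cnj (dft_mat l $$ (t', s)))
      = (\<Sum>s<l. cis (2 * pi * of_int (int t' - int t) * real s / real l)) / of_nat l"
    by (simp add: sum_divide_distrib)
  also have "\<dots> = (if int l dvd int t' - int t then 1 else 0)"
    unfolding sum_cis_multiples[OF l] using l by simp
  also have "(int l dvd int t' - int t) \<longleftrightarrow> t = t'"
  proof
    assume dvd: "int l dvd int t' - int t"
    show "t = t'"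
    proof (rule ccontr)
      assume "t \<noteq> t'"
      then have "int l \<le> \<bar>int t' - int t\<bar>" using dvd_imp_le_int[OF _ dvd] by simp
      then show False using assms by arith
    qed
  qed simp
  finally show ?thesis .
qed

lemma parseval_orthonormal_rows:
  fixes W :: "nat \<Rightarrow> nat \<Rightarrow> complex"
  assumes "\<And>t t'. t < k \<Longrightarrow> t' < k \<Longrightarrow> (\<Sum>s<m. W t s * cnj (W t' s)) = (if t = t' then 1 else 0)"
  shows "(\<Sum>s<m. (\<Sum>t<k. z t * W t s) * cnj (\<Sum>t<k. z t * W t s)) = (\<Sum>t<k. z t * cnj (z t))"
proof -
  have "(\<Sum>s<m. (\<Sum>t<k. z t * W t s) * cnj (\<Sum>t<k. z t * W t s))
      = (\<Sum>s<m. \<Sum>t<k. \<Sum>t'<k. z t * cnj (z t') * (W t s * cnj (W t' s)))"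
    by (simp add: sum_product cnj_sum algebra_simps)
  also have "\<dots> = (\<Sum>t<k. \<Sum>t'<k. z t * cnj (z t') * (\<Sum>s<m. W t s * cnj (W t' s)))"
    by (simp add: sum_distrib_left) (subst sum.swap, rule sum.cong, simp, subst sum.swap, simp)
  also have "\<dots> = (\<Sum>t<k. \<Sum>t'<k. z t * cnj (z t') * (if t = t' then 1 else 0))"
    by (intro sum.cong refl) (simp add: assms)
  also have "\<dots> = (\<Sum>t<k. z t * cnj (z t))"
    by (simp add: if_distrib cong: if_cong)
  finally show ?thesis .
qed

subsection \<open>Unit row norms of \<open>G\<close>\<close>

lemma dim_dft_mat [simp]: "dim_row (dft_mat l) = l" "dim_col (dft_mat l) = l"
  by (simp_all add: dft_mat_def)

lemma dim_Sigma_mat [simp]: "dim_row (Sigma_mat n k \<alpha> \<beta>) = n" "dim_col (Sigma_mat n k \<alpha> \<beta>) = k"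
  by (simp_all add: Sigma_mat_def)

text \<open>Column \<open>t\<close> of \<open>\<Sigma>\<close> is the unit vector at row \<open>Sigma_row n k \<alpha> t\<close>.\<close>

definition Sigma_row :: "nat \<Rightarrow> nat \<Rightarrow> nat \<Rightarrow> nat \<Rightarrow> nat" where
  "Sigma_row n k \<alpha> t = (if t < \<alpha> then t else n - k + t)"

lemma Sigma_row_less: "k < n \<Longrightarrow> t < k \<Longrightarrow> Sigma_row n k \<alpha> t < n"
  by (auto simp: Sigma_row_def)

lemma Sigma_mat_index:
  assumes "u < n" "t < k" "k < n" "\<beta> = k - \<alpha>"
  shows "Sigma_mat n k \<alpha> \<beta> $$ (u, t) = (if u = Sigma_row n k \<alpha> t then 1 else 0)"
proof -
  have "(u < \<alpha> \<and> t = u \<or> n - \<beta> \<le> u \<and> t = \<alpha> + (u - (n - \<beta>))) \<longleftrightarrow> u = Sigma_row n k \<alpha> t"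
    unfolding Sigma_row_def using assms by (cases "t < \<alpha>"; cases "u < \<alpha>"; simp; linarith)
  then show ?thesis using assms(1,2) unfolding Sigma_mat_def by auto
qed

lemma dft_adjoint_Sigma_index:
  assumes "r < n" "t < k" "k < n" "\<beta> = k - \<alpha>"
  shows "(mat_adjoint (dft_mat n) * Sigma_mat n k \<alpha> \<beta>) $$ (r, t) = cnj (dft_mat n $$ (Sigma_row n k \<alpha> t, r))"
proof -
  have "(mat_adjoint (dft_mat n) * Sigma_mat n k \<alpha> \<beta>) $$ (r, t)
      = (\<Sum>u\<in>{0..<n}. cnj (dft_mat n $$ (u, r)) * (if u = Sigma_row n k \<alpha> t then 1 else 0))"
    using assms by (simp add: scalar_prod_def Sigma_mat_index)
  also have "\<dots> = cnj (dft_mat n $$ (Sigma_row n k \<alpha> t, r))"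
    using Sigma_row_less[OF assms(3,2)] by (simp add: if_distrib sum.delta' cong: if_cong)
  finally show ?thesis .
qed

lemma dft_Sigma_dft_gram_diagonal:
  assumes "0 < k" "k < n" "\<beta> = k - \<alpha>" "r < n"
  defines "G \<equiv> complex_of_real (sqrt (real n / real k)) \<cdot>\<^sub>m
                 (mat_adjoint (dft_mat n) * Sigma_mat n k \<alpha> \<beta> * dft_mat k)"
  shows "(G * mat_adjoint G) $$ (r, r) = 1"
proof -
  define z where "z t = complex_of_real (sqrt (real n / real k)) * cnj (dft_mat n $$ (Sigma_row n k \<alpha> t, r))" for t
  have G_index: "G $$ (r, s) = (\<Sum>t<k. z t * dft_mat k $$ (t, s))" if "s < k" for s
  proof -
    have "G $$ (r, s) = complex_of_real (sqrt (real n / real k)) *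
        (\<Sum>t\<in>{0..<k}. (mat_adjoint (dft_mat n) * Sigma_mat n k \<alpha> \<beta>) $$ (r, t) * dft_mat k $$ (t, s))"
      using assms that by (simp add: G_def scalar_prod_def)
    also have "\<dots> = (\<Sum>t<k. z t * dft_mat k $$ (t, s))"
      unfolding z_def sum_distrib_left atLeast0LessThan
      using assms by (intro sum.cong refl) (simp add: dft_adjoint_Sigma_index del: index_mult_mat)
    finally show ?thesis .
  qed
  have z_sq: "z t * cnj (z t) = 1 / of_nat k" if "t < k" for t
  proof -
    have "cmod (z t) = sqrt (real n / real k) / sqrt (real n)"
      using Sigma_row_less[OF assms(2) that] assms
      by (simp add: z_def dft_mat_index norm_mult norm_divide)
    then have "(cmod (z t))\<^sup>2 = 1 / real k"
      using assms by (simp add: power_divide)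
    then show ?thesis by (metis complex_norm_square of_real_divide of_real_1 of_real_of_nat_eq)
  qed
  have "(G * mat_adjoint G) $$ (r, r) = (\<Sum>s<k. G $$ (r, s) * cnj (G $$ (r, s)))"
    using assms(4) by (subst gram_mat_index) (simp_all add: G_def)
  also have "\<dots> = (\<Sum>s<k. (\<Sum>t<k. z t * dft_mat k $$ (t, s)) * cnj (\<Sum>t<k. z t * dft_mat k $$ (t, s)))"
    by (simp add: G_index)
  also have "\<dots> = (\<Sum>t<k. z t * cnj (z t))"
    by (rule parseval_orthonormal_rows) (rule dft_mat_rows_orthonormal)
  also have "\<dots> = 1" using assms by (simp add: z_sq)
  finally show ?thesis .
qed

lemma dim_row_submat [simp]: "dim_row (row_submat A p f) = p" "dim_col (row_submat A p f) = dim_col A"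
  by (simp_all add: row_submat_def)

lemma index_row_submat [simp]: "i < p \<Longrightarrow> j < dim_col A \<Longrightarrow> row_submat A p f $$ (i, j) = A $$ (f i, j)"
  by (simp add: row_submat_def)

lemma row_submat_gram_index:
  fixes A :: "complex mat"
  assumes "i < p" "j < p" "f i < dim_row A" "f j < dim_row A"
  shows "(row_submat A p f * mat_adjoint (row_submat A p f)) $$ (i, j) = (A * mat_adjoint A) $$ (f i, f j)"
proof -
  have "(row_submat A p f * mat_adjoint (row_submat A p f)) $$ (i, j)
      = (\<Sum>s<dim_col A. A $$ (f i, s) * cnj (A $$ (f j, s)))"
    using assms(1,2) by (subst gram_mat_index) simp_all
  also have "\<dots> = (A * mat_adjoint A) $$ (f i, f j)"
    using assms(3,4) by (simp only: gram_mat_index)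
  finally show ?thesis .
qed

theorem theorem1:
  fixes n k p :: nat and f :: "nat \<Rightarrow> nat"
  assumes "1 \<le> k" and "k < n" and "\<not> (even n \<and> even k)"
    and "1 \<le> p" and "p \<le> n"
    and "inj_on f {..<p}" and "f ` {..<p} \<subseteq> {..<n}"
  shows
    "let \<alpha> = nat (\<lceil>real n / 2\<rceil> - \<lfloor>(real n - real k) / 2\<rfloor>);
         \<beta> = k - \<alpha>;
         G = complex_of_real (sqrt (real n / real k)) \<cdot>\<^sub>m
               (mat_adjoint (dft_mat n) * Sigma_mat n k \<alpha> \<beta> * dft_mat k);
         Gp = row_submat G p f;
         M = Gp * mat_adjoint Gp;
         ev = {x :: real. eigenvalue M (complex_of_real x)}
     in Min ev \<le> 1 \<and> Max ev \<ge> 1"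
proof -
  define \<alpha> where "\<alpha> = nat (\<lceil>real n / 2\<rceil> - \<lfloor>(real n - real k) / 2\<rfloor>)"
  define G where "G = complex_of_real (sqrt (real n / real k)) \<cdot>\<^sub>m
                        (mat_adjoint (dft_mat n) * Sigma_mat n k \<alpha> (k - \<alpha>) * dft_mat k)"
  define M where "M = row_submat G p f * mat_adjoint (row_submat G p f)"
  define ev where "ev = {x :: real. eigenvalue M (complex_of_real x)}"
  have M: "M \<in> carrier_mat p p" unfolding M_def carrier_mat_def by simp
  have f: "f i < dim_row G" if "i < p" for i using assms(7) that by (auto simp: G_def)
  have "trace M = (\<Sum>i<p. M $$ (i, i))" using M by (simp add: trace_def)
  also have "\<dots> = (\<Sum>i<p. (G * mat_adjoint G) $$ (f i, f i))"
    unfolding M_def by (intro sum.cong refl row_submat_gram_index) (auto intro: f)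
  also have "\<dots> = (\<Sum>i<p. 1)"
    using assms(1,2,7) unfolding G_def by (intro sum.cong refl dft_Sigma_dft_gram_diagonal) auto
  also have "\<dots> = of_nat p" by simp
  finally have "Re (trace M) = real p" by simp
  moreover note hermitian_mat_Min_Max_eigenvalue_trace[OF M _ _, folded ev_def]
  ultimately have "Min ev * p \<le> p" "p \<le> Max ev * p"
    using assms(4) by (simp_all add: M_def hermitian_gram_mat)
  then have "Min ev \<le> 1 \<and> Max ev \<ge> 1" using assms(4) by simp
  then show ?thesis unfolding Let_def \<alpha>_def[symmetric] G_def[symmetric] M_def[symmetric] ev_def .
qed

end
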